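(* Let $(M,\circ,\mathrm{OR})$ be a free $\mathbb{D}$-module of rank 3 with scalar product and orientation, and let $z_1,z_2,z_3\in M\setminus\epsilon M$ be sliding vectors (zero pitch) with parallel axes. Then $z_1,z_2,z_3$ are $\mathbb{R}$-linearly dependent if and only if their axes are coplanar.
   Context: $\mathbb{D}=\{a+\epsilon b: a,b\in\mathbb{R}\}$, $\epsilon^2=0$. Scalar product: symmetric $\mathbb{D}$-bilinear $\circ:M\times M\to\mathbb{D}$ with $\mathfrak{Re}(x\circ x)\ge0$, equality iff $x\in\epsilon M$; orientation: one of the two classes of ordered bases under $\{b'_j=A_{jk}b_k\}\sim\{b_k\}$ iff $\det\mathfrak{Re}(A)>0$. $V=M/\epsilon M$, $\pi$ the quotient map. $E$ is the set of real 3-dimensional subspaces $P\subset M$ with $\mathfrak{Du}(x\circ y)=0$ for $x,y\in P$ and $P\cap\epsilon M=\{0\}$, a Euclidean affine space over $V$ (with $B-A:=d^ke_k$ where $e^B_i=e^A_i+\epsilon\,\epsilon_{ijk}d^ke^A_j$, $\{e_i\}$ positive orthonormal in $V$, $e^P_i\in P$ its lift). Each $z\in M\setminus\epsilon M$ is uniquely $z=(a+\epsilon b)u$ with $a>0$, $b\in\mathbb{R}$, $u\circ u=1$; its pitch is $b/a$ (a sliding vector is one with pitch $0$) and its axis is the line $\{P\in E: u\in P\}$, with direction $\pi(u)$. *)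

theory Defs
  imports "HOL-Analysis.Analysis"
begin

datatype dual = Dual (dre: real) (ddu: real)

instantiation dual :: comm_ring_1
begin
definition zero_dual_def: "0 = Dual 0 0"
definition one_dual_def: "1 = Dual 1 0"
definition plus_dual_def: "x + y = Dual (dre x + dre y) (ddu x + ddu y)"
definition minus_dual_def: "x - y = Dual (dre x - dre y) (ddu x - ddu y)"
definition uminus_dual_def: "- x = Dual (- dre x) (- ddu x)"
definition times_dual_def: "x * y = Dual (dre x * dre y) (dre x * ddu y + ddu x * dre y)"
instance
  by standard (auto simp: zero_dual_def one_dual_def plus_dual_def minus_dual_def
      uminus_dual_def times_dual_def dual.expand algebra_simps)
end

definition deps :: dual where "deps = Dual 0 1"

definition rscale :: "(dual \<Rightarrow> 'm \<Rightarrow> 'm) \<Rightarrow> real \<Rightarrow> 'm \<Rightarrow> 'm" where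
  "rscale smul r x = smul (Dual r 0) x"

definition epsM :: "(dual \<Rightarrow> 'm \<Rightarrow> 'm) \<Rightarrow> 'm set" where
  "epsM smul = range (smul deps)"

definition is_dbasis :: "(dual \<Rightarrow> 'm::ab_group_add \<Rightarrow> 'm) \<Rightarrow> 'm^3 \<Rightarrow> bool" where
  "is_dbasis smul b \<longleftrightarrow> (\<forall>x. \<exists>!c::dual^3. x = (\<Sum>i\<in>UNIV. smul (c$i) (b$i)))"

definition free_rank3 :: "(dual \<Rightarrow> 'm::ab_group_add \<Rightarrow> 'm) \<Rightarrow> bool" where
  "free_rank3 smul \<longleftrightarrow> (\<exists>b. is_dbasis smul b)"

definition is_scalar_product ::
  "(dual \<Rightarrow> 'm::ab_group_add \<Rightarrow> 'm) \<Rightarrow> ('m \<Rightarrow> 'm \<Rightarrow> dual) \<Rightarrow> bool" where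
  "is_scalar_product smul sp \<longleftrightarrow>
     (\<forall>x y. sp x y = sp y x) \<and>
     (\<forall>x y w. sp (x + y) w = sp x w + sp y w) \<and>
     (\<forall>a x w. sp (smul a x) w = a * sp x w) \<and>
     (\<forall>x. dre (sp x x) \<ge> 0) \<and>
     (\<forall>x. dre (sp x x) = 0 \<longleftrightarrow> x \<in> epsM smul)"

definition same_orientation ::
  "(dual \<Rightarrow> 'm::ab_group_add \<Rightarrow> 'm) \<Rightarrow> 'm^3 \<Rightarrow> 'm^3 \<Rightarrow> bool" where
  "same_orientation smul b b' \<longleftrightarrow>
     (\<exists>A::dual^3^3. (\<forall>j. b'$j = (\<Sum>k\<in>UNIV. smul (A$j$k) (b$k))) \<and>
        det (\<chi> j k. dre (A$j$k)) > 0)"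

definition is_orientation ::
  "(dual \<Rightarrow> 'm::ab_group_add \<Rightarrow> 'm) \<Rightarrow> ('m^3) set \<Rightarrow> bool" where
  "is_orientation smul OR \<longleftrightarrow>
     (\<exists>b. is_dbasis smul b \<and> OR = {b'. is_dbasis smul b' \<and> same_orientation smul b b'})"

definition dmod_sp_or ::
  "(dual \<Rightarrow> 'm::ab_group_add \<Rightarrow> 'm) \<Rightarrow> ('m \<Rightarrow> 'm \<Rightarrow> dual) \<Rightarrow> ('m^3) set \<Rightarrow> bool" where
  "dmod_sp_or smul sp OR \<longleftrightarrow>
     module smul \<and> free_rank3 smul \<and> is_scalar_product smul sp \<and> is_orientation smul OR"

definition real_dim3_subspace :: "(dual \<Rightarrow> 'm::ab_group_add \<Rightarrow> 'm) \<Rightarrow> 'm set \<Rightarrow> bool" where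
  "real_dim3_subspace smul P \<longleftrightarrow>
     module.subspace (rscale smul) P \<and>
     (\<exists>B. finite B \<and> card B = 3 \<and> \<not> module.dependent (rscale smul) B \<and>
          module.span (rscale smul) B = P)"

definition Espace ::
  "(dual \<Rightarrow> 'm::ab_group_add \<Rightarrow> 'm) \<Rightarrow> ('m \<Rightarrow> 'm \<Rightarrow> dual) \<Rightarrow> 'm set set" where
  "Espace smul sp = {P. real_dim3_subspace smul P \<and>
      (\<forall>x\<in>P. \<forall>y\<in>P. ddu (sp x y) = 0) \<and> P \<inter> epsM smul = {0}}"

text \<open>The lift of (the class of) v in V = M / eps M to P: the unique element of P
  congruent to v modulo eps M.\<close>
definition lift_to :: "(dual \<Rightarrow> 'm::ab_group_add \<Rightarrow> 'm) \<Rightarrow> 'm set \<Rightarrow> 'm \<Rightarrow> 'm" where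
  "lift_to smul P v = (THE x. x \<in> P \<and> x - v \<in> epsM smul)"

text \<open>Positive orthonormal basis of V, given by representatives f_i in M of e_i = pi(f_i):
  orthonormal for the induced real scalar product on V, and positively oriented,
  i.e. (a, equivalently every) lift lies in OR.\<close>
definition pos_orthonormal_V ::
  "(dual \<Rightarrow> 'm::ab_group_add \<Rightarrow> 'm) \<Rightarrow> ('m \<Rightarrow> 'm \<Rightarrow> dual) \<Rightarrow> ('m^3) set \<Rightarrow> 'm^3 \<Rightarrow> bool" where
  "pos_orthonormal_V smul sp OR f \<longleftrightarrow>
     f \<in> OR \<and> (\<forall>i j. dre (sp (f$i) (f$j)) = (if i = j then 1 else 0))"

text \<open>Levi-Civita symbol on the index type 3 = {0,1,2} (arithmetic mod 3).\<close>
definition levi :: "3 \<Rightarrow> 3 \<Rightarrow> 3 \<Rightarrow> real" where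
  "levi i j k = (if i \<noteq> j \<and> j \<noteq> k \<and> i \<noteq> k then (if j = i + 1 then 1 else -1) else 0)"

text \<open>Coordinates d (w.r.t. the basis e) of B - A = d^k e_k, where
  e^B_i = e^A_i + eps eps_ijk d^k e^A_j.\<close>
definition Ediff ::
  "(dual \<Rightarrow> 'm::ab_group_add \<Rightarrow> 'm) \<Rightarrow> 'm^3 \<Rightarrow> 'm set \<Rightarrow> 'm set \<Rightarrow> real^3" where
  "Ediff smul f B A = (THE d::real^3. \<forall>i.
      lift_to smul B (f$i) = lift_to smul A (f$i) +
        (\<Sum>j\<in>UNIV. \<Sum>k\<in>UNIV. smul (Dual 0 (levi i j k * d$k)) (lift_to smul A (f$j))))"

definition coplanar_in_E ::
  "(dual \<Rightarrow> 'm::ab_group_add \<Rightarrow> 'm) \<Rightarrow> ('m \<Rightarrow> 'm \<Rightarrow> dual) \<Rightarrow> ('m^3) set \<Rightarrow> 'm set set set \<Rightarrow> bool" where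
  "coplanar_in_E smul sp OR Ls \<longleftrightarrow>
     (\<exists>f. pos_orthonormal_V smul sp OR f \<and>
       (\<exists>A\<in>Espace smul sp. \<exists>W::(real^3) set. subspace W \<and> dim W = 2 \<and>
          (\<forall>L\<in>Ls. \<forall>P\<in>L. Ediff smul f P A \<in> W)))"

definition polar_decomp ::
  "(dual \<Rightarrow> 'm::ab_group_add \<Rightarrow> 'm) \<Rightarrow> ('m \<Rightarrow> 'm \<Rightarrow> dual) \<Rightarrow> 'm \<Rightarrow> real \<Rightarrow> real \<Rightarrow> 'm \<Rightarrow> bool" where
  "polar_decomp smul sp z a b u \<longleftrightarrow> a > 0 \<and> z = smul (Dual a b) u \<and> sp u u = 1"

definition pitch :: "(dual \<Rightarrow> 'm::ab_group_add \<Rightarrow> 'm) \<Rightarrow> ('m \<Rightarrow> 'm \<Rightarrow> dual) \<Rightarrow> 'm \<Rightarrow> real" where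
  "pitch smul sp z = (THE p. \<exists>a b u. polar_decomp smul sp z a b u \<and> p = b / a)"

definition unit_part :: "(dual \<Rightarrow> 'm::ab_group_add \<Rightarrow> 'm) \<Rightarrow> ('m \<Rightarrow> 'm \<Rightarrow> dual) \<Rightarrow> 'm \<Rightarrow> 'm" where
  "unit_part smul sp z = (THE u. \<exists>a b. polar_decomp smul sp z a b u)"

definition sliding_vector :: "(dual \<Rightarrow> 'm::ab_group_add \<Rightarrow> 'm) \<Rightarrow> ('m \<Rightarrow> 'm \<Rightarrow> dual) \<Rightarrow> 'm \<Rightarrow> bool" where
  "sliding_vector smul sp z \<longleftrightarrow> z \<notin> epsM smul \<and> pitch smul sp z = 0"

definition axis :: "(dual \<Rightarrow> 'm::ab_group_add \<Rightarrow> 'm) \<Rightarrow> ('m \<Rightarrow> 'm \<Rightarrow> dual) \<Rightarrow> 'm \<Rightarrow> 'm set set" where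
  "axis smul sp z = {P \<in> Espace smul sp. unit_part smul sp z \<in> P}"

text \<open>Axes are parallel iff their directions pi(u) span the same line of V
  (the directions are nonzero).\<close>
definition parallel_axes :: "(dual \<Rightarrow> 'm::ab_group_add \<Rightarrow> 'm) \<Rightarrow> ('m \<Rightarrow> 'm \<Rightarrow> dual) \<Rightarrow> 'm \<Rightarrow> 'm \<Rightarrow> bool" where
  "parallel_axes smul sp z w \<longleftrightarrow>
     (\<exists>c::real. unit_part smul sp z - rscale smul c (unit_part smul sp w) \<in> epsM smul)"

end

theory Submission
  imports Defs
begin

text \<open>Lift a positive orthonormal frame of \<open>V\<close> to a point \<open>A\<close> of \<open>E\<close>. This gives an orthonormal
  D-basis of \<open>M\<close>, in which every \<open>x\<close> has real and dual coordinate vectors \<open>re x\<close>, \<open>du x\<close>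
  in \<open>\<real>\<^sup>3\<close>, and the point of \<open>E\<close> at displacement \<open>D\<close> from \<open>A\<close> is \<open>{x. du x = D \<times> re x}\<close>.
  So, seen from \<open>A\<close>, the axis of a unit screw \<open>u\<close> is the line with Pluecker coordinates
  \<open>(re u, du u)\<close>, and a sliding vector is a positive multiple of its unit screw.
  For parallel axes the directions \<open>re u\<^sub>i\<close> are parallel, and three parallel lines lie in a
  plane through \<open>A\<close> iff their moments \<open>du u\<^sub>i\<close> are collinear. Parallel directions and
  collinear moments give a real dependence, since it amounts to two linear equations in three
  unknowns. Conversely, choosing \<open>A\<close> on the first axis makes \<open>du u\<^sub>1 = 0\<close>, and then a
  dependence forces the remaining two moments to be collinear.\<close>

unbundle cross3_syntax

lemma dual_simps [simp]:
  "dre (x + y) = dre x + dre y" "ddu (x + y) = ddu x + ddu y"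
  "dre (x * y) = dre x * dre y" "ddu (x * y) = dre x * ddu y + ddu x * dre y"
  "dre 0 = 0" "ddu 0 = 0" "dre 1 = 1" "ddu 1 = 0"
  "dre (- x) = - dre x" "ddu (- x) = - ddu x"
  "dre (x - y) = dre x - dre y" "ddu (x - y) = ddu x - ddu y"
  "dre deps = 0" "ddu deps = 1"
  by (simp_all add: plus_dual_def times_dual_def zero_dual_def one_dual_def uminus_dual_def
      minus_dual_def deps_def)

lemma dual_eq_iff: "x = y \<longleftrightarrow> dre x = dre y \<and> ddu x = ddu y"
  using dual.expand by blast

lemma deps_squared [simp]: "deps * deps = 0"
  by (simp add: dual_eq_iff)

lemma dre_sum: "dre (sum f S) = (\<Sum>x\<in>S. dre (f x))"
  by (induct S rule: infinite_finite_induct) auto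

lemma ddu_sum: "ddu (sum f S) = (\<Sum>x\<in>S. ddu (f x))"
  by (induct S rule: infinite_finite_induct) auto

lemma Dual_eq_real_plus_deps: "Dual a b = Dual a 0 + deps * Dual b 0"
  by (simp add: dual_eq_iff)

lemma Dual_real_arith:
  "Dual a 0 + Dual b 0 = Dual (a + b) 0" "Dual a 0 * Dual b 0 = Dual (a * b) 0" "Dual 1 0 = 1"
  by (simp_all add: dual_eq_iff)

section \<open>Cross products and lines in \<open>\<real>\<^sup>3\<close>\<close>

abbreviation basis_vec :: "3 \<Rightarrow> real^3" where
  "basis_vec i \<equiv> Finite_Cartesian_Product.axis i 1"

lemmas cross3_coord_simps = cross3_simps forall_3 Finite_Cartesian_Product.axis_def

lemma cross_basis_vec_inj: "(\<And>i. D \<times> basis_vec i = d \<times> basis_vec i) \<Longrightarrow> D = d"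
proof -
  assume "\<And>i. D \<times> basis_vec i = d \<times> basis_vec i"
  from this[of 1] this[of 2] show "D = d" by (simp add: cross3_coord_simps)
qed

lemma levi_sum_eq_cross: "(\<Sum>j\<in>UNIV. \<Sum>k\<in>UNIV. (levi i j k * d$k) *\<^sub>R basis_vec j) = d \<times> basis_vec i"
  using exhaust_3[of i] by (auto simp: levi_def sum_3 cross3_coord_simps)

text \<open>The line with Pluecker coordinates \<open>(x, w)\<close>, provided \<open>x \<noteq> 0\<close> and \<open>w \<bullet> x = 0\<close>; otherwise the
  set is empty or all of \<open>\<real>\<^sup>3\<close>.\<close>

definition moment_line :: "real^3 \<Rightarrow> real^3 \<Rightarrow> (real^3) set" where
  "moment_line x w = {d. d \<times> x = w}"

lemma cross_eq_0_imp_in_span: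
  fixes n x :: "real^3"
  assumes "n \<noteq> 0" "n \<times> x = 0"
  shows "x \<in> span {n}"
proof -
  have nx: "(n \<bullet> x) *\<^sub>R n = (n \<bullet> n) *\<^sub>R x"
    using Lagrange[of n n x] assms(2) by simp
  have "x = inverse (n \<bullet> n) *\<^sub>R ((n \<bullet> n) *\<^sub>R x)"
    using assms(1) by simp
  also have "\<dots> = inverse (n \<bullet> n) *\<^sub>R ((n \<bullet> x) *\<^sub>R n)"
    using nx by simp
  finally show ?thesis by (metis span_base span_scale singletonI)
qed

lemma exists_orthogonal_to_two:
  fixes a b :: "real^3"
  obtains n where "n \<noteq> 0" "n \<bullet> a = 0" "n \<bullet> b = 0"
proof -
  have "dim {a, b} \<le> card {a, b}"
    by (rule dim_le_card) (auto intro: span_base)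
  also have "\<dots> < DIM(real^3)" by (simp add: card_insert_if)
  finally obtain n where "n \<noteq> 0" "span {a, b} \<subseteq> {y. n \<bullet> y = 0}"
    using lowdim_subset_hyperplane by metis
  with that show ?thesis using span_base[of _ "{a, b}"] by auto
qed

lemma moment_line_point:
  fixes x w :: "real^3"
  assumes "x \<noteq> 0" "w \<bullet> x = 0"
  shows "(1 / (x \<bullet> x)) *\<^sub>R (x \<times> w) \<in> moment_line x w"
proof -
  have "(x \<times> w) \<times> x = (x \<bullet> x) *\<^sub>R w"
    using Lagrange[of x x w] assms(2) by (simp add: cross_skew[of "x \<times> w"] inner_commute)
  then show ?thesis using assms(1) by (simp add: moment_line_def cross_mult_left)
qed

lemma moment_in_span_normal:
  fixes n x w :: "real^3"
  assumes "n \<noteq> 0" "subspace W" "\<forall>y\<in>W. n \<bullet> y = 0"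
    and "x \<noteq> 0" "w \<bullet> x = 0" "moment_line x w \<subseteq> W"
  shows "w \<in> span {n}"
proof -
  define d where "d = (1 / (x \<bullet> x)) *\<^sub>R (x \<times> w)"
  have d: "d \<times> x = w" "d \<in> W"
    using moment_line_point[OF assms(4,5)] assms(6) by (auto simp: d_def moment_line_def)
  then have "d + x \<in> W"
    using assms(6) by (auto simp: moment_line_def cross_add_left)
  then have "x \<in> W" using d(2) assms(2) by (metis add_diff_cancel_left' subspace_diff)
  then have "n \<times> w = 0"
    using Lagrange[of n d x] d assms(3) by simp
  then show ?thesis using cross_eq_0_imp_in_span[OF assms(1)] by blast
qed

lemma parallel_lines_in_common_plane:
  fixes v m :: "real^3"
  obtains n where "n \<noteq> 0"
    "\<And>x w. x \<noteq> 0 \<Longrightarrow> x \<in> span {v} \<Longrightarrow> w \<in> span {m} \<Longrightarrow> moment_line x w \<subseteq> {y. n \<bullet> y = 0}"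
proof -
  obtain n where n: "n \<noteq> 0" "n \<bullet> v = 0" "n \<bullet> (v \<times> m) = 0"
    using exists_orthogonal_to_two by blast
  have "n \<bullet> d = 0" if x0: "x \<noteq> 0" and xv: "x \<in> span {v}" and wm: "w \<in> span {m}"
    and d: "d \<times> x = w" for x w d
  proof -
    obtain k c where x: "x = k *\<^sub>R v" and w: "w = c *\<^sub>R m"
      using xv wm by (auto simp: span_singleton)
    have "n \<bullet> x = 0" using x n(2) by simp
    then have "(x \<bullet> x) * (n \<bullet> d) = (d \<times> x) \<bullet> (n \<times> x)"
      using cross_triple[of d x "n \<times> x"] Lagrange[of x n x] by (simp add: inner_commute)
    also have "\<dots> = (c * k) * ((n \<times> v) \<bullet> m)"
      using d x w by (simp add: cross_mult_right inner_commute)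
    also have "\<dots> = (c * k) * (n \<bullet> (v \<times> m))"
      using cross_triple[of n v m] by (simp add: inner_commute)
    finally show ?thesis using n(3) x0 by simp
  qed
  with n(1) show ?thesis by (intro that) (auto simp: moment_line_def)
qed

lemma dependent_if_collinear:
  fixes x1 x2 x3 y1 y2 y3 :: "real^3"
  assumes "{x1, x2, x3} \<subseteq> span {v}" "{y1, y2, y3} \<subseteq> span {m}"
  shows "\<exists>l1 l2 l3. (l1, l2, l3) \<noteq> (0, 0, 0) \<and>
    l1 *\<^sub>R x1 + l2 *\<^sub>R x2 + l3 *\<^sub>R x3 = 0 \<and> l1 *\<^sub>R y1 + l2 *\<^sub>R y2 + l3 *\<^sub>R y3 = 0"
proof -
  obtain a1 a2 a3 b1 b2 b3 where
    x: "x1 = a1 *\<^sub>R v" "x2 = a2 *\<^sub>R v" "x3 = a3 *\<^sub>R v" and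
    y: "y1 = b1 *\<^sub>R m" "y2 = b2 *\<^sub>R m" "y3 = b3 *\<^sub>R m"
    using assms unfolding span_singleton insert_subset by blast
  obtain l :: "real^3" where l: "l \<noteq> 0" "l \<bullet> vector [a1, a2, a3] = 0" "l \<bullet> vector [b1, b2, b3] = 0"
    using exists_orthogonal_to_two by blast
  show ?thesis
  proof (intro exI conjI)
    show "(l$1, l$2, l$3) \<noteq> (0, 0, 0)" using l(1) by (auto simp: vec_eq_iff forall_3)
    show "l$1 *\<^sub>R x1 + l$2 *\<^sub>R x2 + l$3 *\<^sub>R x3 = 0" "l$1 *\<^sub>R y1 + l$2 *\<^sub>R y2 + l$3 *\<^sub>R y3 = 0"
      using l(2,3) by (simp_all add: x y inner_vec_def sum_3 scaleR_left_distrib[symmetric] mult.commute)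
  qed
qed

lemma collinear_if_dependent:
  fixes x1 x2 x3 y1 y2 y3 :: "real^3"
  assumes "(l1, l2, l3) \<noteq> (0, 0, 0)" "l1 *\<^sub>R x1 + l2 *\<^sub>R x2 + l3 *\<^sub>R x3 = 0"
    "l1 *\<^sub>R y1 + l2 *\<^sub>R y2 + l3 *\<^sub>R y3 = 0" and "x1 \<noteq> 0" "y1 = 0"
  shows "\<exists>m. {y1, y2, y3} \<subseteq> span {m}"
proof (cases "l3 = 0")
  case True
  then have "l2 \<noteq> 0" using assms(1,2,4) by auto
  then have "y2 = 0" using True assms(3,5) by simp
  then have "{y1, y2, y3} \<subseteq> span {y3}" using assms(5) by (auto intro: span_base span_zero)
  then show ?thesis ..
next
  case False
  have "l3 *\<^sub>R y3 = - (l2 *\<^sub>R y2)"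
    using assms(3,5) by (simp add: eq_neg_iff_add_eq_0 add.commute)
  then have "y3 = inverse l3 *\<^sub>R (- (l2 *\<^sub>R y2))"
    using False by (metis scaleR_scaleR left_inverse scaleR_one)
  then have "y3 = (- l2 / l3) *\<^sub>R y2" by (simp add: divide_inverse mult.commute)
  then have "{y1, y2, y3} \<subseteq> span {y2}"
    using assms(5) by (auto intro: span_base span_zero span_scale span_neg)
  then show ?thesis ..
qed

section \<open>Rank-3 D-modules with scalar product\<close>

locale screw_module =
  fixes smul :: "dual \<Rightarrow> 'm::ab_group_add \<Rightarrow> 'm" and sp :: "'m \<Rightarrow> 'm \<Rightarrow> dual" and b0 :: "'m^3"
  assumes module: "module smul" and scalar_product: "is_scalar_product smul sp"
    and basis: "is_dbasis smul b0"
begin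

sublocale M: module smul by (rule module)

sublocale R: vector_space "rscale smul"
  unfolding vector_space_def rscale_def
  by (simp add: M.scale_right_distrib M.scale_left_distrib[symmetric] Dual_real_arith)

abbreviation "EM \<equiv> epsM smul"
abbreviation "rs \<equiv> rscale smul"
abbreviation "emul x \<equiv> smul deps x"
abbreviation "axis_of u \<equiv> {P \<in> Espace smul sp. u \<in> P}"

lemma rs_eq: "rs a x = smul (Dual a 0) x" by (simp add: rscale_def)

lemma smul_Dual: "smul (Dual a b) x = rs a x + emul (rs b x)"
  by (simp add: rs_eq Dual_eq_real_plus_deps[of a b] M.scale_left_distrib)

lemma sp_sym: "sp x y = sp y x" using scalar_product unfolding is_scalar_product_def by blast
lemma sp_add_l: "sp (x + y) w = sp x w + sp y w" using scalar_product unfolding is_scalar_product_def by blast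
lemma sp_smul_l: "sp (smul a x) w = a * sp x w" using scalar_product unfolding is_scalar_product_def by blast
lemma sp_pos: "dre (sp x x) \<ge> 0" using scalar_product unfolding is_scalar_product_def by blast
lemma sp_zero_iff: "dre (sp x x) = 0 \<longleftrightarrow> x \<in> EM" using scalar_product unfolding is_scalar_product_def by blast

lemma sp_add_r: "sp w (x + y) = sp w x + sp w y" by (metis sp_sym sp_add_l)
lemma sp_smul_r: "sp w (smul a x) = a * sp w x" by (metis sp_sym sp_smul_l)
lemma sp_zero_l [simp]: "sp 0 w = 0" using sp_smul_l[of 0 0 w] by simp
lemma sp_zero_r [simp]: "sp w 0 = 0" by (metis sp_sym sp_zero_l)

lemma sp_minus_l: "sp (- x) w = - sp x w"
  using sp_add_l[of "-x" x w] by (simp add: eq_neg_iff_add_eq_0)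

lemma sp_minus_r: "sp w (- x) = - sp w x" by (metis sp_sym sp_minus_l)
lemma sp_diff_l: "sp (x - y) w = sp x w - sp y w"
  by (simp only: diff_conv_add_uminus sp_add_l sp_minus_l)
lemma sp_diff_r: "sp w (x - y) = sp w x - sp w y"
  by (simp only: diff_conv_add_uminus sp_add_r sp_minus_r)
lemma sp_sum_l: "sp (sum f S) w = (\<Sum>x\<in>S. sp (f x) w)"
  by (induct S rule: infinite_finite_induct) (auto simp: sp_add_l)
lemma sp_sum_r: "sp w (sum f S) = (\<Sum>x\<in>S. sp w (f x))"
  by (induct S rule: infinite_finite_induct) (auto simp: sp_add_r)
lemma sp_rs_l: "sp (rs a x) w = Dual a 0 * sp x w" by (simp add: rs_eq sp_smul_l)
lemma sp_rs_r: "sp w (rs a x) = Dual a 0 * sp w x" by (simp add: rs_eq sp_smul_r)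
lemma sp_emul_l: "sp (emul x) w = deps * sp x w" by (simp add: sp_smul_l)
lemma sp_emul_r: "sp w (emul x) = deps * sp w x" by (simp add: sp_smul_r)

lemma EM_iff: "x \<in> EM \<longleftrightarrow> (\<exists>t. x = emul t)" by (auto simp: epsM_def)
lemma EM_emul [simp]: "emul t \<in> EM" by (auto simp: epsM_def)
lemma EM_zero [simp]: "0 \<in> EM" using EM_emul[of 0] by simp
lemma EM_minus: "x \<in> EM \<Longrightarrow> - x \<in> EM"
  by (auto simp: EM_iff M.scale_minus_right[symmetric] simp del: M.scale_minus_right)
lemma EM_diff: "x \<in> EM \<Longrightarrow> y \<in> EM \<Longrightarrow> x - y \<in> EM"
  by (auto simp: EM_iff M.scale_right_diff_distrib[symmetric])
lemma EM_rs: "x \<in> EM \<Longrightarrow> rs a x \<in> EM"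
  unfolding EM_iff rs_eq by (metis M.scale_scale mult.commute)
lemma dre_sp_EM_l: "x \<in> EM \<Longrightarrow> dre (sp x y) = 0" by (auto simp: EM_iff sp_emul_l)
lemma dre_sp_EM_r: "x \<in> EM \<Longrightarrow> dre (sp y x) = 0" by (auto simp: EM_iff sp_emul_r)

lemma dre_sp_cong_EM:
  assumes "x - x' \<in> EM" "y - y' \<in> EM"
  shows "dre (sp x y) = dre (sp x' y')"
proof -
  have "sp (x' + (x - x')) (y' + (y - y')) =
      sp x' y' + sp x' (y - y') + (sp (x - x') y' + sp (x - x') (y - y'))"
    by (simp only: sp_add_l sp_add_r add_ac)
  then show ?thesis using assms dre_sp_EM_l dre_sp_EM_r by simp
qed

definition bcoords :: "'m \<Rightarrow> dual^3" where
  "bcoords x = (THE c. x = (\<Sum>i\<in>UNIV. smul (c$i) (b0$i)))"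

lemma bcoords_ex1: "\<exists>!c. x = (\<Sum>i\<in>UNIV. smul (c$i) (b0$i))"
  using basis unfolding is_dbasis_def by blast

lemma bcoords_expansion: "x = (\<Sum>i\<in>UNIV. smul (bcoords x $ i) (b0$i))"
  unfolding bcoords_def by (rule theI'[OF bcoords_ex1])

lemma bcoords_unique: "x = (\<Sum>i\<in>UNIV. smul (c$i) (b0$i)) \<Longrightarrow> bcoords x = c"
  using bcoords_ex1[of x] bcoords_expansion[of x] by blast

lemma bcoords_add: "bcoords (x + y) = bcoords x + bcoords y"
  by (rule bcoords_unique, subst bcoords_expansion[of x], subst bcoords_expansion[of y])
    (simp add: M.scale_left_distrib sum.distrib)

lemma bcoords_smul: "bcoords (smul a x) = (\<chi> i. a * bcoords x $ i)"
  by (rule bcoords_unique, subst bcoords_expansion[of x]) (simp add: M.scale_sum_right)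

definition rcoords :: "'m \<Rightarrow> real^3" where
  "rcoords x = (\<chi> i. dre (bcoords x $ i))"

lemma rcoords_add: "rcoords (x + y) = rcoords x + rcoords y"
  by (simp add: rcoords_def bcoords_add vec_eq_iff)

lemma rcoords_rs: "rcoords (rs a x) = a *\<^sub>R rcoords x"
  by (simp add: rcoords_def rs_eq bcoords_smul vec_eq_iff)

lemma rcoords_emul: "rcoords (emul x) = 0"
  by (simp add: rcoords_def bcoords_smul vec_eq_iff)

lemma rcoords_eq_0_iff: "rcoords x = 0 \<longleftrightarrow> x \<in> EM"
proof
  assume "rcoords x = 0"
  then have "bcoords x $ i = deps * Dual (ddu (bcoords x $ i)) 0" for i
    by (simp add: rcoords_def vec_eq_iff dual_eq_iff)
  then have "x = (\<Sum>i\<in>UNIV. emul (smul (Dual (ddu (bcoords x $ i)) 0) (b0$i)))"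
    by (subst bcoords_expansion[of x]) simp
  then show "x \<in> EM" by (metis EM_emul M.scale_sum_right)
qed (auto simp: EM_iff rcoords_emul)

lemma rcoords_diff: "rcoords (x - y) = rcoords x - rcoords y"
  using rcoords_add[of "x - y" y] by (simp add: eq_diff_eq)

lemma rcoords_sum: "rcoords (sum f S) = (\<Sum>i\<in>S. rcoords (f i))"
  by (induct S rule: infinite_finite_induct) (auto simp: rcoords_add rcoords_eq_0_iff)

lemma rcoords_basis: "rcoords (b0$i) = basis_vec i"
proof -
  have "bcoords (b0$i) = (\<chi> j. if j = i then 1 else 0)"
    by (rule bcoords_unique) (use exhaust_3[of i] in \<open>auto simp: sum_3\<close>)
  then show ?thesis by (simp add: rcoords_def vec_eq_iff Finite_Cartesian_Product.axis_def)
qed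

text \<open>\<^const>\<open>rcoords\<close> identifies \<open>M / \<epsilon>M\<close> with \<open>\<real>\<^sup>3\<close>, where injective linear maps are onto.\<close>

lemma spans_mod_EM:
  fixes q :: "'m^3"
  assumes "\<And>l::real^3. (\<Sum>i\<in>UNIV. rs (l$i) (q$i)) \<in> EM \<Longrightarrow> l = 0"
  shows "\<exists>l::real^3. x - (\<Sum>i\<in>UNIV. rs (l$i) (q$i)) \<in> EM"
proof -
  define g where "g l = rcoords (\<Sum>i\<in>UNIV. rs (l$i) (q$i))" for l :: "real^3"
  have "linear g"
    by (rule linearI) (simp_all add: g_def R.scale_left_distrib sum.distrib rcoords_add rcoords_sum
        rcoords_rs scaleR_sum_right flip: R.scale_scale)
  moreover have "inj g"
    unfolding linear_injective_0[OF \<open>linear g\<close>] using assms by (simp add: g_def rcoords_eq_0_iff)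
  ultimately obtain l where "g l = rcoords x"
    by (metis linear_injective_imp_surjective surjD)
  then have "rcoords (x - (\<Sum>i\<in>UNIV. rs (l$i) (q$i))) = 0"
    by (simp add: g_def rcoords_diff)
  then show ?thesis by (auto simp: rcoords_eq_0_iff)
qed

lemma Espace_D:
  assumes "P \<in> Espace smul sp"
  shows "R.subspace P" "\<And>x y. x \<in> P \<Longrightarrow> y \<in> P \<Longrightarrow> ddu (sp x y) = 0"
    "\<And>x. x \<in> P \<Longrightarrow> x \<in> EM \<Longrightarrow> x = 0"
  using assms by (auto simp: Espace_def real_dim3_subspace_def)

lemma Espace_real_frame:
  assumes P: "P \<in> Espace smul sp"
  obtains q :: "'m^3" where "\<And>l. (\<Sum>i\<in>UNIV. rs (l$i) (q$i)) \<in> P"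
    "\<And>l. (\<Sum>i\<in>UNIV. rs (l$i) (q$i)) \<in> EM \<Longrightarrow> l = 0"
proof -
  from P obtain B where B: "card B = 3" "\<not> R.dependent B" "R.span B = P"
    and PE: "P \<inter> EM = {0}"
    by (auto simp: Espace_def real_dim3_subspace_def)
  from B(1) obtain q1 q2 q3 where q: "B = {q1, q2, q3}" "q1 \<noteq> q2" "q2 \<noteq> q3" "q1 \<noteq> q3"
    by (auto simp: card_3_iff)
  define q :: "'m^3" where "q = vector [q1, q2, q3]"
  have sum_q: "(\<Sum>i\<in>UNIV. rs (l$i) (q$i)) = rs (l$1) q1 + rs (l$2) q2 + rs (l$3) q3" for l :: "real^3"
    by (simp add: sum_3 q_def)
  have in_P: "(\<Sum>i\<in>UNIV. rs (l$i) (q$i)) \<in> P" for l :: "real^3"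
    unfolding sum_q B(3)[symmetric] q(1) by (intro R.span_add R.span_scale R.span_base) auto
  have "l = 0" if "(\<Sum>i\<in>UNIV. rs (l$i) (q$i)) \<in> EM" for l :: "real^3"
  proof -
    define u where "u v = (if v = q1 then l$1 else if v = q2 then l$2 else l$3)" for v
    have "(\<Sum>v\<in>B. rs (u v) v) = (\<Sum>i\<in>UNIV. rs (l$i) (q$i))"
      using q by (simp add: sum_q u_def add.assoc)
    also have "\<dots> = 0" using in_P[of l] that PE by blast
    finally have "u v = 0" if "v \<in> B" for v
      using R.independentD[OF B(2) _ order_refl] that q(1) by blast
    then have "u q1 = 0" "u q2 = 0" "u q3 = 0" using q(1) by auto
    then show "l = 0" using q by (auto simp: u_def vec_eq_iff forall_3)
  qed
  with in_P that show ?thesis by blast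
qed

lemma lift_to_ex1:
  assumes P: "P \<in> Espace smul sp"
  shows "\<exists>!x. x \<in> P \<and> x - v \<in> EM"
proof -
  obtain q :: "'m^3" where in_P: "\<And>l. (\<Sum>i\<in>UNIV. rs (l$i) (q$i)) \<in> P"
    and indep: "\<And>l. (\<Sum>i\<in>UNIV. rs (l$i) (q$i)) \<in> EM \<Longrightarrow> l = 0"
    using Espace_real_frame[OF P] by blast
  obtain l where "v - (\<Sum>i\<in>UNIV. rs (l$i) (q$i)) \<in> EM"
    using spans_mod_EM[OF indep] by blast
  then have "(\<Sum>i\<in>UNIV. rs (l$i) (q$i)) - v \<in> EM"
    using EM_minus by (metis minus_diff_eq)
  moreover have "y = x" if "x \<in> P" "x - v \<in> EM" "y \<in> P" "y - v \<in> EM" for x y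
  proof -
    have "y - x \<in> P" using that Espace_D(1)[OF P] R.subspace_diff by blast
    moreover have "y - x \<in> EM" using EM_diff[OF that(4,2)] by simp
    ultimately show "y = x" using Espace_D(3)[OF P] by fastforce
  qed
  ultimately show ?thesis using in_P by blast
qed

lemma lift_to_mem: "P \<in> Espace smul sp \<Longrightarrow> lift_to smul P v \<in> P"
  and lift_to_cong: "P \<in> Espace smul sp \<Longrightarrow> lift_to smul P v - v \<in> EM"
  using theI'[OF lift_to_ex1] unfolding lift_to_def by auto

definition orthonormal :: "'m^3 \<Rightarrow> bool" where
  "orthonormal a \<longleftrightarrow> (\<forall>i j. sp (a$i) (a$j) = (if i = j then 1 else 0))"

definition orthonormal_mod_EM :: "'m^3 \<Rightarrow> bool" where
  "orthonormal_mod_EM f \<longleftrightarrow> (\<forall>i j. dre (sp (f$i) (f$j)) = (if i = j then 1 else 0))"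

lemma orthonormal_lift_to:
  assumes f: "orthonormal_mod_EM f" and A: "A \<in> Espace smul sp"
  shows "orthonormal (\<chi> i. lift_to smul A (f$i))"
  unfolding orthonormal_def
proof (intro allI)
  fix i j
  let ?a = "\<lambda>i. lift_to smul A (f$i)"
  have "dre (sp (?a i) (?a j)) = dre (sp (f$i) (f$j))"
    using lift_to_cong[OF A] by (intro dre_sp_cong_EM)
  moreover have "ddu (sp (?a i) (?a j)) = 0" using Espace_D(2)[OF A] lift_to_mem[OF A] by blast
  ultimately show "sp ((\<chi> i. ?a i) $ i) ((\<chi> i. ?a i) $ j) = (if i = j then 1 else 0)"
    using f unfolding orthonormal_mod_EM_def by (simp add: dual_eq_iff)
qed

end

locale orthonormal_frame = screw_module +
  fixes a :: "'a^3"
  assumes orthonormal_a: "orthonormal a"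
begin

lemma sp_a: "sp (a$i) (a$j) = (if i = j then 1 else 0)"
  using orthonormal_a by (simp add: orthonormal_def)

lemma sp_rs_sum_a: "sp (\<Sum>i\<in>UNIV. rs (l$i) (a$i)) (a$k) = Dual (l$k) 0"
  by (simp add: sp_sum_l sp_rs_l sp_a if_distrib cong: if_cong)

lemma in_EM_if_dre_sp_a: "(\<And>k. dre (sp y (a$k)) = 0) \<Longrightarrow> y \<in> EM"
proof -
  assume y: "\<And>k. dre (sp y (a$k)) = 0"
  have indep: "l = 0" if "(\<Sum>i\<in>UNIV. rs (l$i) (a$i)) \<in> EM" for l :: "real^3"
  proof -
    have "l$k = 0" for k using dre_sp_EM_l[OF that, of "a$k"] by (simp add: sp_rs_sum_a)
    then show ?thesis by (simp add: vec_eq_iff)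
  qed
  obtain l where l: "y - (\<Sum>i\<in>UNIV. rs (l$i) (a$i)) \<in> EM"
    using spans_mod_EM[OF indep] by blast
  have "l$k = 0" for k
    using dre_sp_EM_l[OF l, of "a$k"] y[of k] by (simp add: sp_diff_l sp_rs_sum_a)
  then show "y \<in> EM" using l by (simp add: vec_eq_iff)
qed

lemma expansion: "x = (\<Sum>j\<in>UNIV. smul (sp x (a$j)) (a$j))"
proof -
  define y where "y = x - (\<Sum>j\<in>UNIV. smul (sp x (a$j)) (a$j))"
  have sp_y: "sp y (a$k) = 0" for k
    by (simp add: y_def sp_diff_l sp_sum_l sp_smul_l sp_a if_distrib cong: if_cong)
  then have "y \<in> EM" using in_EM_if_dre_sp_a by simp
  then obtain t where t: "y = emul t" by (auto simp: EM_iff)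
  have "deps * sp t (a$k) = 0" for k using sp_y[of k] t by (simp add: sp_emul_l)
  then have "t \<in> EM" using in_EM_if_dre_sp_a by (simp add: dual_eq_iff)
  then have "y = 0" using t by (auto simp: EM_iff)
  then show ?thesis by (simp add: y_def)
qed

text \<open>For a unit screw \<open>u\<close>, \<open>(re u, du u)\<close> are the Pluecker coordinates of its axis as seen from
  the point of \<open>E\<close> spanned by the frame.\<close>

definition re :: "'a \<Rightarrow> real^3" where "re x = (\<chi> j. dre (sp x (a$j)))"
definition du :: "'a \<Rightarrow> real^3" where "du x = (\<chi> j. ddu (sp x (a$j)))"

lemma re_add: "re (x + y) = re x + re y" by (simp add: re_def sp_add_l vec_eq_iff)
lemma du_add: "du (x + y) = du x + du y" by (simp add: du_def sp_add_l vec_eq_iff)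
lemma re_diff: "re (x - y) = re x - re y" by (simp add: re_def sp_diff_l vec_eq_iff)
lemma re_rs: "re (rs c x) = c *\<^sub>R re x" by (simp add: re_def sp_rs_l vec_eq_iff)
lemma du_rs: "du (rs c x) = c *\<^sub>R du x" by (simp add: du_def sp_rs_l vec_eq_iff)
lemma re_emul: "re (emul x) = 0" by (simp add: re_def sp_emul_l vec_eq_iff)
lemma du_emul: "du (emul x) = re x" by (simp add: du_def re_def sp_emul_l vec_eq_iff)
lemma re_zero [simp]: "re 0 = 0" by (simp add: re_def vec_eq_iff)
lemma du_zero [simp]: "du 0 = 0" by (simp add: du_def vec_eq_iff)
lemma re_sum: "re (sum f S) = (\<Sum>i\<in>S. re (f i))"
  by (induct S rule: infinite_finite_induct) (auto simp: re_add)
lemma du_sum: "du (sum f S) = (\<Sum>i\<in>S. du (f i))"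
  by (induct S rule: infinite_finite_induct) (auto simp: du_add)
lemma re_a: "re (a$i) = basis_vec i"
  by (simp add: re_def sp_a vec_eq_iff Finite_Cartesian_Product.axis_def)
lemma du_a: "du (a$i) = 0"
  by (simp add: du_def sp_a vec_eq_iff)

lemma eq_iff_coords: "x = y \<longleftrightarrow> re x = re y \<and> du x = du y"
proof
  assume "re x = re y \<and> du x = du y"
  then have "sp x (a$j) = sp y (a$j)" for j
    by (simp add: re_def du_def vec_eq_iff dual_eq_iff)
  then show "x = y" by (subst expansion[of x], subst expansion[of y]) simp
qed simp

lemma EM_iff_re_eq_0: "x \<in> EM \<longleftrightarrow> re x = 0"
proof
  show "re x = 0 \<Longrightarrow> x \<in> EM" using in_EM_if_dre_sp_a by (simp add: re_def vec_eq_iff)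
qed (auto simp: EM_iff re_emul)

lemma re_eq_if_cong: "x - rs c y \<in> EM \<Longrightarrow> re x = c *\<^sub>R re y"
  by (simp add: EM_iff_re_eq_0 re_diff re_rs)

lemma dependent3_iff_coords:
  "rs l1 x1 + rs l2 x2 + rs l3 x3 = 0 \<longleftrightarrow>
    l1 *\<^sub>R re x1 + l2 *\<^sub>R re x2 + l3 *\<^sub>R re x3 = 0 \<and>
    l1 *\<^sub>R du x1 + l2 *\<^sub>R du x2 + l3 *\<^sub>R du x3 = 0"
  by (simp add: eq_iff_coords re_add re_rs du_add du_rs)

definition of_coords :: "real^3 \<Rightarrow> real^3 \<Rightarrow> 'a" where
  "of_coords r s = (\<Sum>j\<in>UNIV. rs (r$j) (a$j)) + emul (\<Sum>j\<in>UNIV. rs (s$j) (a$j))"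

lemma re_of_coords [simp]: "re (of_coords r s) = r"
  and du_of_coords [simp]: "du (of_coords r s) = s"
proof -
  have re_lin: "re (\<Sum>j\<in>UNIV. rs (r$j) (a$j)) = r" for r
    by (simp add: re_sum re_rs re_a vec_eq_iff Finite_Cartesian_Product.axis_def if_distrib
        cong: if_cong)
  have "du (\<Sum>j\<in>UNIV. rs (r$j) (a$j)) = 0" for r
    by (simp add: du_sum du_rs du_a)
  with re_lin show "re (of_coords r s) = r" "du (of_coords r s) = s"
    by (simp_all add: of_coords_def re_add du_add re_emul du_emul)
qed

lemma sp_eq_coords: "sp x y = Dual (re x \<bullet> re y) (re x \<bullet> du y + du x \<bullet> re y)"
proof -
  have "sp x y = sp x (\<Sum>j\<in>UNIV. smul (sp y (a$j)) (a$j))" by (subst expansion[of y]) simp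
  also have "\<dots> = (\<Sum>j\<in>UNIV. sp y (a$j) * sp x (a$j))" by (simp add: sp_sum_r sp_smul_r)
  finally show ?thesis
    by (simp add: dual_eq_iff dre_sum ddu_sum re_def du_def inner_vec_def algebra_simps sum.distrib)
qed

lemma unit_coords:
  assumes "sp u u = 1"
  shows "re u \<bullet> re u = 1" "du u \<bullet> re u = 0" "re u \<noteq> 0"
  using assms by (auto simp: sp_eq_coords dual_eq_iff inner_commute)

text \<open>The point of \<open>E\<close> at displacement \<open>D\<close> from the point spanned by the frame.\<close>

definition point_at :: "real^3 \<Rightarrow> 'a set" where
  "point_at D = {x. du x = D \<times> re x}"

lemma point_at_subspace: "R.subspace (point_at D)"
  unfolding R.subspace_def point_at_def
  by (auto simp: re_add du_add re_rs du_rs cross_add_right cross_mult_right)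

lemma point_at_real_dim3: "real_dim3_subspace smul (point_at D)"
proof -
  define p where "p i = of_coords (basis_vec i) (D \<times> basis_vec i)" for i
  have "inj p"
    by (rule injI) (metis re_of_coords p_def axis_eq_axis one_neq_zero)
  have indep: "\<not> R.dependent (range p)"
  proof (rule R.independent_if_scalars_zero)
    fix g x assume g: "(\<Sum>x\<in>range p. rs (g x) x) = 0" and "x \<in> range p"
    have "re (\<Sum>x\<in>range p. rs (g x) x) = (\<Sum>i\<in>UNIV. g (p i) *\<^sub>R re (p i))"
      by (simp add: sum.reindex[OF \<open>inj p\<close>] re_sum re_rs)
    also have "\<dots> = (\<Sum>i\<in>UNIV. g (p i) *\<^sub>R basis_vec i)" by (simp add: p_def)
    finally have "(\<Sum>i\<in>UNIV. g (p i) *\<^sub>R basis_vec i) = 0" using g by simp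
    then have "g (p i) = 0" for i using exhaust_3[of i] by (auto simp: sum_3 cross3_coord_simps)
    then show "g x = 0" using \<open>x \<in> range p\<close> by blast
  qed simp
  have "R.span (range p) = point_at D"
  proof
    show "R.span (range p) \<subseteq> point_at D"
      using point_at_subspace by (intro R.span_minimal) (auto simp: point_at_def p_def)
    show "point_at D \<subseteq> R.span (range p)"
    proof
      fix x assume x: "x \<in> point_at D"
      have "x = (\<Sum>i\<in>UNIV. rs (re x $ i) (p i))"
        unfolding eq_iff_coords re_sum du_sum using x
        by (simp add: re_rs du_rs p_def point_at_def sum_3) (simp add: cross3_coord_simps)
      also have "\<dots> \<in> R.span (range p)"
        by (intro R.span_sum R.span_scale R.span_base) auto
      finally show "x \<in> R.span (range p)" .
    qed
  qed
  moreover have "card (range p) = 3" using card_image[OF \<open>inj p\<close>] by simp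
  ultimately show ?thesis
    unfolding real_dim3_subspace_def using point_at_subspace indep by (metis finite_imageI finite)
qed

lemma point_at_in_Espace: "point_at D \<in> Espace smul sp"
proof -
  have "ddu (sp x y) = 0" if "x \<in> point_at D" "y \<in> point_at D" for x y
    using that by (simp add: sp_eq_coords point_at_def) (simp add: cross3_coord_simps)
  moreover have "point_at D \<inter> EM = {0}"
    by (auto simp: point_at_def EM_iff_re_eq_0 eq_iff_coords[of _ 0])
  ultimately show ?thesis
    unfolding Espace_def mem_Collect_eq using point_at_real_dim3 by (intro conjI) auto
qed

end

locale frame_at_point = screw_module +
  fixes f :: "'a^3" and A :: "'a set"
  assumes orthonormal_f: "orthonormal_mod_EM f" and A_point: "A \<in> Espace smul sp"

sublocale frame_at_point \<subseteq> orthonormal_frame smul sp b0 "\<chi> i. lift_to smul A (f$i)"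
  using orthonormal_lift_to[OF orthonormal_f A_point] by unfold_locales

context frame_at_point
begin

lemma re_lift_to:
  assumes P: "P \<in> Espace smul sp"
  shows "re (lift_to smul P (f$i)) = basis_vec i"
proof -
  have "re (f$i) = re (lift_to smul A (f$i))"
    using lift_to_cong[OF A_point] by (simp add: EM_iff_re_eq_0 re_diff)
  also have "\<dots> = basis_vec i" using re_a[of i] by simp
  finally show ?thesis
    using lift_to_cong[OF P] by (simp add: EM_iff_re_eq_0 re_diff)
qed

lemma du_eq_on_point:
  assumes P: "P \<in> Espace smul sp" and x: "x \<in> P"
  shows "du x = (\<Sum>i\<in>UNIV. re x $ i *\<^sub>R du (lift_to smul P (f$i)))"
proof -
  define y where "y = (\<Sum>i\<in>UNIV. rs (re x $ i) (lift_to smul P (f$i)))"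
  have "y \<in> P"
    unfolding y_def using Espace_D(1)[OF P] lift_to_mem[OF P]
    by (intro R.subspace_sum R.subspace_scale) auto
  then have "x - y \<in> P" using x Espace_D(1)[OF P] R.subspace_diff by blast
  moreover have "re (x - y) = 0"
    by (simp add: y_def re_diff re_sum re_rs re_lift_to[OF P]) (simp add: cross3_coord_simps)
  ultimately have "x = y" using Espace_D(3)[OF P] EM_iff_re_eq_0 by fastforce
  then have "du x = du y" by simp
  then show ?thesis by (simp add: y_def du_sum du_rs)
qed

lemma du_eq_0_on_A: "x \<in> A \<Longrightarrow> du x = 0"
  using du_eq_on_point[OF A_point] du_a by simp

lemma exists_displacement:
  assumes P: "P \<in> Espace smul sp"
  obtains D where "\<And>x. x \<in> P \<Longrightarrow> du x = D \<times> re x"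
proof -
  define t where "t i = du (lift_to smul P (f$i))" for i
  have skew: "t j $ i + t i $ j = 0" for i j
  proof -
    have "ddu (sp (lift_to smul P (f$i)) (lift_to smul P (f$j))) = 0"
      using Espace_D(2)[OF P lift_to_mem[OF P] lift_to_mem[OF P]] .
    then show ?thesis
      by (simp add: sp_eq_coords re_lift_to[OF P] t_def inner_axis inner_axis' inner_commute)
  qed
  define D :: "real^3" where "D = vector [t 2 $ 3, t 3 $ 1, t 1 $ 2]"
  have "t 1 $ 1 = 0" "t 2 $ 2 = 0" "t 3 $ 3 = 0" using skew[of 1 1] skew[of 2 2] skew[of 3 3] by simp_all
  moreover have "t 2 $ 1 = - t 1 $ 2" "t 3 $ 1 = - t 1 $ 3" "t 3 $ 2 = - t 2 $ 3"
    using skew[of 1 2] skew[of 1 3] skew[of 2 3] by (simp_all add: eq_neg_iff_add_eq_0 add.commute)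
  ultimately have "(\<Sum>i\<in>UNIV. r $ i *\<^sub>R t i) = D \<times> r" for r
    by (simp add: D_def cross3_coord_simps)
  then show ?thesis using that du_eq_on_point[OF P] by (simp add: t_def)
qed

lemma Ediff_eqI:
  assumes P: "P \<in> Espace smul sp" and D: "\<And>x. x \<in> P \<Longrightarrow> du x = D \<times> re x"
  shows "Ediff smul f P A = D"
proof -
  let ?shift = "\<lambda>d i. \<Sum>j\<in>UNIV. \<Sum>k\<in>UNIV. smul (Dual 0 (levi i j k * d$k)) (lift_to smul A (f$j))"
  have re_shift: "re (?shift d i) = 0" and du_shift: "du (?shift d i) = d \<times> basis_vec i" for d i
    using re_a du_a
    by (simp_all add: re_sum du_sum smul_Dual re_add du_add re_rs du_rs re_emul du_emul levi_sum_eq_cross)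
  have du_lift: "du (lift_to smul P (f$i)) = D \<times> basis_vec i" for i
    using D lift_to_mem[OF P] re_lift_to[OF P] by metis
  show ?thesis unfolding Ediff_def
  proof (rule the_equality)
    show "\<forall>i. lift_to smul P (f$i) = lift_to smul A (f$i) + ?shift D i"
      using re_a du_a
      by (simp add: eq_iff_coords re_add du_add re_shift du_shift re_lift_to[OF P] du_lift)
    fix d assume "\<forall>i. lift_to smul P (f$i) = lift_to smul A (f$i) + ?shift d i"
    then have "du (lift_to smul P (f$i)) = du (lift_to smul A (f$i) + ?shift d i)" for i
      by metis
    then have "D \<times> basis_vec i = d \<times> basis_vec i" for i
      using du_a by (simp add: du_add du_shift du_lift)
    then show "d = D" using cross_basis_vec_inj by metis
  qed
qed

lemma du_eq_Ediff_cross: "P \<in> Espace smul sp \<Longrightarrow> x \<in> P \<Longrightarrow> du x = Ediff smul f P A \<times> re x"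
  by (metis exists_displacement Ediff_eqI)

lemma Ediff_point_at: "Ediff smul f (point_at D) A = D"
  by (rule Ediff_eqI[OF point_at_in_Espace]) (simp add: point_at_def)

lemma Ediff_image_axis:
  "(\<lambda>P. Ediff smul f P A) ` axis_of u = moment_line (re u) (du u)"
proof
  show "(\<lambda>P. Ediff smul f P A) ` axis_of u \<subseteq> moment_line (re u) (du u)"
    using du_eq_Ediff_cross by (auto simp: moment_line_def)
  show "moment_line (re u) (du u) \<subseteq> (\<lambda>P. Ediff smul f P A) ` axis_of u"
  proof
    fix D assume "D \<in> moment_line (re u) (du u)"
    then have "u \<in> point_at D" by (simp add: moment_line_def point_at_def)
    then have "point_at D \<in> axis_of u" using point_at_in_Espace by simp
    then show "D \<in> (\<lambda>P. Ediff smul f P A) ` axis_of u"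
      using Ediff_point_at[of D] by (simp add: image_iff) metis
  qed
qed

lemma Ediff_axis_subset_iff:
  "(\<forall>P\<in>axis_of u. Ediff smul f P A \<in> W) \<longleftrightarrow> moment_line (re u) (du u) \<subseteq> W"
  using image_subset_iff[of "\<lambda>P. Ediff smul f P A" "axis_of u" W]
  unfolding Ediff_image_axis by (rule sym)

lemma parallel_re_in_span:
  assumes "sp u2 u2 = 1" "u1 - rs c12 u2 \<in> EM" "u2 - rs c23 u3 \<in> EM"
  shows "{re u1, re u2, re u3} \<subseteq> span {re u2}" "re u3 \<noteq> 0"
proof -
  have "re u2 \<noteq> 0" using unit_coords(3)[OF assms(1)] .
  moreover have r: "re u1 = c12 *\<^sub>R re u2" "re u2 = c23 *\<^sub>R re u3"
    using re_eq_if_cong assms(2,3) by auto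
  ultimately have "c23 \<noteq> 0" "re u3 \<noteq> 0" by auto
  then have "re u3 = (1 / c23) *\<^sub>R re u2" using r(2) by simp
  with r(1) show "{re u1, re u2, re u3} \<subseteq> span {re u2}" by (auto intro: span_base span_scale)
  show "re u3 \<noteq> 0" by fact
qed

end

section \<open>Sliding vectors\<close>

context screw_module
begin

lemma polar_decomp_exists:
  assumes z: "z \<notin> EM"
  shows "\<exists>a b u. polar_decomp smul sp z a b u"
proof -
  define p where "p = dre (sp z z)"
  define q where "q = ddu (sp z z)"
  have "p > 0" using sp_pos[of z] sp_zero_iff[of z] z unfolding p_def by linarith
  define \<alpha> where "\<alpha> = sqrt p"
  have \<alpha>: "\<alpha> > 0" "p = \<alpha> * \<alpha>" using \<open>p > 0\<close> by (auto simp: \<alpha>_def)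
  define \<beta> where "\<beta> = q / (2 * \<alpha>)"
    \<comment> \<open>so that \<open>(\<alpha> + \<epsilon>\<beta>)\<^sup>2 = p + \<epsilon>q\<close>; below, \<open>c\<close> is the inverse of \<open>\<alpha> + \<epsilon>\<beta>\<close>\<close>
  define c where "c = Dual (1 / \<alpha>) (- \<beta> / (\<alpha> * \<alpha>))"
  define u where "u = smul c z"
  have "Dual \<alpha> \<beta> * c = 1" using \<alpha>(1) unfolding c_def by (simp add: dual_eq_iff field_simps)
  then have "smul (Dual \<alpha> \<beta>) u = z" unfolding u_def by simp
  moreover have "sp u u = 1"
  proof -
    have "sp u u = c * c * sp z z" unfolding u_def by (simp add: sp_smul_l sp_smul_r mult.assoc)
    also have "sp z z = Dual p q" unfolding p_def q_def by (simp add: dual_eq_iff)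
    finally show ?thesis using \<alpha> unfolding c_def \<beta>_def by (simp add: dual_eq_iff field_simps)
  qed
  ultimately show ?thesis using \<alpha>(1) unfolding polar_decomp_def by metis
qed

lemma polar_decomp_unique:
  assumes "polar_decomp smul sp z a b u" "polar_decomp smul sp z a' b' u'"
  shows "a = a' \<and> b = b' \<and> u = u'"
proof -
  have a: "a > 0" "a' > 0" and z: "z = smul (Dual a b) u" "z = smul (Dual a' b') u'"
    and u: "sp u u = 1" "sp u' u' = 1" using assms by (auto simp: polar_decomp_def)
  have "Dual a b * Dual a b = Dual a' b' * Dual a' b'"
    using z u by (metis sp_smul_l sp_smul_r mult.right_neutral)
  then have sq: "a * a = a' * a'" and "a * b = a' * b'"
    unfolding dual_eq_iff by (simp_all add: algebra_simps)
  have "a = a'" using sq a by (metis abs_of_pos real_sqrt_abs2)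
  moreover have "b = b'" using \<open>a * b = a' * b'\<close> a \<open>a = a'\<close> by simp
  moreover define c where "c = Dual (1 / a) (- b / (a * a))"
  have c: "c * Dual a b = 1" using a unfolding c_def by (simp add: dual_eq_iff field_simps)
  have "smul c z = u" using z(1) c by simp
  moreover have "smul c z = u'" using z(2) c \<open>a = a'\<close> \<open>b = b'\<close> by simp
  ultimately show ?thesis by simp
qed

lemma sliding_vector_decomp:
  assumes "z \<notin> EM" "sliding_vector smul sp z"
  obtains a where "a > 0" "z = rs a (unit_part smul sp z)"
    "sp (unit_part smul sp z) (unit_part smul sp z) = 1"
proof -
  obtain a b u where d: "polar_decomp smul sp z a b u" using polar_decomp_exists[OF assms(1)] by blast
  have "unit_part smul sp z = u" unfolding unit_part_def
    using d polar_decomp_unique[OF d] by blast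
  moreover have "pitch smul sp z = b / a" unfolding pitch_def
    using d polar_decomp_unique[OF d] by (intro the_equality) blast+
  then have "b = 0" using assms(2) d by (auto simp: sliding_vector_def polar_decomp_def)
  ultimately show ?thesis using d that by (auto simp: polar_decomp_def rs_eq)
qed

lemma orthonormal_mod_EM_independent:
  assumes f: "orthonormal_mod_EM f" and d: "(\<Sum>i\<in>UNIV. smul (d$i) (f$i)) = 0"
  shows "d = 0"
proof -
  have fo: "dre (sp (f$i) (f$j)) = (if i = j then 1 else 0)" for i j
    using f by (simp add: orthonormal_mod_EM_def)
  have e: "(\<Sum>i\<in>UNIV. d$i * sp (f$i) (f$k)) = 0" for k
    using arg_cong[OF d, of "\<lambda>y. sp y (f$k)"] by (simp add: sp_sum_l sp_smul_l)
  have "dre (d$k) = 0" for k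
    using arg_cong[OF e[of k], of dre] exhaust_3[of k] by (auto simp: dre_sum sum_3 fo)
  moreover have "ddu (d$k) = 0" for k
    using arg_cong[OF e[of k], of ddu] exhaust_3[of k] calculation by (auto simp: ddu_sum sum_3 fo)
  ultimately show "d = 0" by (simp add: vec_eq_iff dual_eq_iff)
qed

lemma orthonormal_mod_EM_spans:
  assumes f: "orthonormal_mod_EM f"
  shows "\<exists>c. x = (\<Sum>i\<in>UNIV. smul (c$i) (f$i))"
proof -
  have fo: "dre (sp (f$i) (f$j)) = (if i = j then 1 else 0)" for i j
    using f by (simp add: orthonormal_mod_EM_def)
  have indep: "l = 0" if "(\<Sum>i\<in>UNIV. rs (l$i) (f$i)) \<in> EM" for l :: "real^3"
  proof -
    have "dre (sp (\<Sum>i\<in>UNIV. rs (l$i) (f$i)) (f$k)) = l$k" for k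
      by (simp add: sp_sum_l sp_rs_l dre_sum fo if_distrib cong: if_cong)
    then show ?thesis using dre_sp_EM_l[OF that] by (simp add: vec_eq_iff)
  qed
  obtain l where "x - (\<Sum>i\<in>UNIV. rs (l$i) (f$i)) \<in> EM" using spans_mod_EM[OF indep] by blast
  then obtain t where t: "x = (\<Sum>i\<in>UNIV. rs (l$i) (f$i)) + emul t"
    by (auto simp: EM_iff algebra_simps)
  obtain m where "t - (\<Sum>i\<in>UNIV. rs (m$i) (f$i)) \<in> EM" using spans_mod_EM[OF indep] by blast
  then obtain t' where "t = (\<Sum>i\<in>UNIV. rs (m$i) (f$i)) + emul t'"
    by (auto simp: EM_iff algebra_simps)
  with t have "x = (\<Sum>i\<in>UNIV. rs (l$i) (f$i)) + emul (\<Sum>i\<in>UNIV. rs (m$i) (f$i))"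
    by (simp add: M.scale_right_distrib)
  also have "\<dots> = (\<Sum>i\<in>UNIV. smul ((\<chi> i. Dual (l$i) (m$i))$i) (f$i))"
    by (simp add: smul_Dual M.scale_sum_right sum.distrib)
  finally show ?thesis ..
qed

lemma orthonormal_mod_EM_is_dbasis:
  assumes f: "orthonormal_mod_EM f"
  shows "is_dbasis smul f"
  unfolding is_dbasis_def
proof
  fix x
  obtain c where c: "x = (\<Sum>i\<in>UNIV. smul (c$i) (f$i))" using orthonormal_mod_EM_spans[OF f] by blast
  moreover have "c' = c" if "x = (\<Sum>i\<in>UNIV. smul (c'$i) (f$i))" for c'
  proof -
    have "(\<Sum>i\<in>UNIV. smul ((c' - c)$i) (f$i)) = 0"
      using that c by (simp add: M.scale_left_diff_distrib sum_subtractf)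
    then show ?thesis using orthonormal_mod_EM_independent[OF f, of "c' - c"] by simp
  qed
  ultimately show "\<exists>!c. x = (\<Sum>i\<in>UNIV. smul (c$i) (f$i))" by blast
qed

lemma same_orientation_if_det_rcoords_pos:
  assumes "det (\<chi> j k. rcoords (g$j) $ k) > 0"
  shows "same_orientation smul b0 g"
  unfolding same_orientation_def
proof (intro exI conjI allI)
  show "g$j = (\<Sum>k\<in>UNIV. smul ((\<chi> j k. bcoords (g$j) $ k) $ j $ k) (b0$k))" for j
    using bcoords_expansion[of "g$j"] by simp
  show "det (\<chi> j k. dre ((\<chi> j k. bcoords (g$j) $ k) $ j $ k)) > 0"
    using assms by (simp add: rcoords_def)
qed

definition rsp :: "'m \<Rightarrow> 'm \<Rightarrow> real" where "rsp x y = dre (sp x y)"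

definition normalize :: "'m \<Rightarrow> 'm" where "normalize x = rs (1 / sqrt (rsp x x)) x"

lemma rsp_sym: "rsp x y = rsp y x" by (simp add: rsp_def sp_sym)
lemma rsp_diff_l: "rsp (x - y) z = rsp x z - rsp y z" by (simp add: rsp_def sp_diff_l)
lemma rsp_rs_l: "rsp (rs c x) z = c * rsp x z" by (simp add: rsp_def sp_rs_l)

lemma rsp_pos: "x \<notin> EM \<Longrightarrow> rsp x x > 0"
  using sp_pos[of x] sp_zero_iff[of x] by (simp add: rsp_def less_le)

lemma rsp_normalize: "x \<notin> EM \<Longrightarrow> rsp (normalize x) (normalize x) = 1"
  using rsp_pos[of x] by (simp add: normalize_def rsp_def sp_rs_l sp_rs_r)

lemma orthonormal_mod_EM_vector:
  assumes "rsp g1 g1 = 1" "rsp g2 g2 = 1" "rsp g3 g3 = 1"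
    and "rsp g2 g1 = 0" "rsp g3 g1 = 0" "rsp g3 g2 = 0"
  shows "orthonormal_mod_EM (vector [g1, g2, g3])"
proof -
  have "rsp g1 g2 = 0" "rsp g1 g3 = 0" "rsp g2 g3 = 0"
    using assms(4-6) rsp_sym by metis+
  with assms show ?thesis
    unfolding orthonormal_mod_EM_def rsp_def[symmetric] forall_3 by simp
qed

text \<open>Gram-Schmidt applied to \<open>b0\<close> modulo \<open>\<epsilon>M\<close>; the change of basis is triangular with positive
  diagonal, so the orientation is kept.\<close>

lemma exists_positive_orthonormal_mod_EM:
  obtains f where "is_dbasis smul f" "same_orientation smul b0 f" "orthonormal_mod_EM f"
proof -
  define g1 where "g1 = normalize (b0$1)"
  define h2 where "h2 = b0$2 - rs (rsp (b0$2) g1) g1"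
  define g2 where "g2 = normalize h2"
  define h3 where "h3 = b0$3 - rs (rsp (b0$3) g1) g1 - rs (rsp (b0$3) g2) g2"
  define g3 where "g3 = normalize h3"
  define n1 where "n1 = sqrt (rsp (b0$1) (b0$1))"
  define n2 where "n2 = sqrt (rsp h2 h2)"
  define n3 where "n3 = sqrt (rsp h3 h3)"
  have not_EM: "rcoords x $ i \<noteq> 0 \<Longrightarrow> x \<notin> EM" for x i using rcoords_eq_0_iff by force
  have b1: "b0$1 \<notin> EM" by (rule not_EM[of _ 1]) (simp add: rcoords_basis)
  have rg1: "rcoords g1 = (1 / n1) *\<^sub>R basis_vec 1"
    by (simp add: g1_def normalize_def rcoords_rs rcoords_basis n1_def)
  have rh2: "rcoords h2 = basis_vec 2 - (rsp (b0$2) g1 / n1) *\<^sub>R basis_vec 1"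
    by (simp add: h2_def rcoords_diff rcoords_rs rg1 rcoords_basis)
  have h2: "h2 \<notin> EM" by (rule not_EM[of _ 2]) (simp add: rh2 Finite_Cartesian_Product.axis_def)
  have rg2: "rcoords g2 = (1 / n2) *\<^sub>R rcoords h2" by (simp add: g2_def normalize_def rcoords_rs n2_def)
  have rh3: "rcoords h3 = basis_vec 3 - (rsp (b0$3) g1 / n1) *\<^sub>R basis_vec 1
      - (rsp (b0$3) g2 / n2) *\<^sub>R rcoords h2"
    by (simp add: h3_def rcoords_diff rcoords_rs rg1 rg2 rcoords_basis)
  have h3: "h3 \<notin> EM" by (rule not_EM[of _ 3]) (simp add: rh3 rh2 Finite_Cartesian_Product.axis_def)
  have rg3: "rcoords g3 = (1 / n3) *\<^sub>R rcoords h3" by (simp add: g3_def normalize_def rcoords_rs n3_def)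
  have "n1 > 0" "n2 > 0" "n3 > 0" using rsp_pos[OF b1] rsp_pos[OF h2] rsp_pos[OF h3]
    by (simp_all add: n1_def n2_def n3_def)
  define g :: "'m^3" where "g = vector [g1, g2, g3]"
  have "det (\<chi> j k. rcoords (g$j) $ k) = (1 / n1) * (1 / n2) * (1 / n3)"
    by (simp add: det_3 g_def rg1 rg2 rg3 rh2 rh3 Finite_Cartesian_Product.axis_def)
  with \<open>n1 > 0\<close> \<open>n2 > 0\<close> \<open>n3 > 0\<close> have "same_orientation smul b0 g"
    by (intro same_orientation_if_det_rcoords_pos) simp
  moreover have "orthonormal_mod_EM g"
  proof -
    have o11: "rsp g1 g1 = 1" using rsp_normalize[OF b1] by (simp add: g1_def)
    have o22: "rsp g2 g2 = 1" using rsp_normalize[OF h2] by (simp add: g2_def)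
    have o21: "rsp g2 g1 = 0" by (simp add: g2_def normalize_def rsp_rs_l h2_def rsp_diff_l o11)
    show ?thesis unfolding g_def
    proof (rule orthonormal_mod_EM_vector)
      show "rsp g3 g3 = 1" using rsp_normalize[OF h3] by (simp add: g3_def)
      show "rsp g3 g1 = 0" by (simp add: g3_def normalize_def rsp_rs_l h3_def rsp_diff_l o11 o21)
      show "rsp g3 g2 = 0"
        by (simp add: g3_def normalize_def rsp_rs_l h3_def rsp_diff_l o22 rsp_sym[of g1 g2] o21)
    qed fact+
  qed
  ultimately show ?thesis using that orthonormal_mod_EM_is_dbasis by blast
qed

text \<open>An orthonormal basis modulo \<open>\<epsilon>M\<close> is corrected to an orthonormal one by subtracting
  half of the dual part of its Gram matrix.\<close>

lemma exists_orthonormal: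
  assumes f: "orthonormal_mod_EM f"
  obtains a where "orthonormal a"
proof -
  have fo: "dre (sp (f$i) (f$j)) = (if i = j then 1 else 0)" for i j
    using f by (simp add: orthonormal_mod_EM_def)
  define S where "S i k = ddu (sp (f$i) (f$k))" for i k
  define Y where "Y i = (\<Sum>k\<in>UNIV. rs (S i k) (f$k))" for i
  define a :: "'m^3" where "a = (\<chi> i. f$i - rs (1/2) (emul (Y i)))"
  have dre_Y: "dre (sp (Y i) (f$j)) = S i j" for i j
    using exhaust_3[of j] by (auto simp: Y_def sum_3 sp_add_l sp_rs_l fo S_def)
  have dre_Y': "dre (sp (f$i) (Y j)) = S i j" for i j
    using dre_Y[of j i] by (simp add: sp_sym S_def)
  have "sp (a$i) (a$j) = (if i = j then 1 else 0)" for i j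
  proof -
    have "a$i - f$i \<in> EM" "a$j - f$j \<in> EM" by (auto simp: a_def intro!: EM_minus EM_rs)
    then have "dre (sp (a$i) (a$j)) = (if i = j then 1 else 0)"
      using dre_sp_cong_EM fo by metis
    moreover have "ddu (sp (a$i) (a$j)) = 0"
      by (simp add: a_def sp_diff_l sp_diff_r sp_rs_l sp_rs_r sp_emul_l sp_emul_r dre_Y dre_Y')
        (simp add: S_def)
    ultimately show ?thesis by (simp add: dual_eq_iff)
  qed
  then have "orthonormal a" by (simp add: orthonormal_def)
  then show ?thesis by (rule that)
qed

lemma exists_point_on_axis:
  assumes "sp u u = 1"
  obtains A where "A \<in> Espace smul sp" "u \<in> A"
proof -
  obtain f where "orthonormal_mod_EM f" using exists_positive_orthonormal_mod_EM by blast
  then obtain a where "orthonormal a" by (rule exists_orthonormal)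
  then interpret orthonormal_frame smul sp b0 a by unfold_locales
  have "re u \<noteq> 0" "du u \<bullet> re u = 0" using unit_coords[OF assms] by auto
  then obtain D where "D \<times> re u = du u"
    using moment_line_point by (auto simp: moment_line_def)
  then have "u \<in> point_at D" by (simp add: point_at_def)
  then show ?thesis using that point_at_in_Espace by blast
qed

section \<open>Dependence of parallel sliding vectors\<close>

lemma dependent3_rescale_iff:
  assumes "a1 \<noteq> 0" "a2 \<noteq> 0" "a3 \<noteq> 0"
  shows "(\<exists>c1 c2 c3. (c1, c2, c3) \<noteq> (0, 0, 0) \<and> rs c1 (rs a1 u1) + rs c2 (rs a2 u2) + rs c3 (rs a3 u3) = 0)
    \<longleftrightarrow> (\<exists>l1 l2 l3. (l1, l2, l3) \<noteq> (0, 0, 0) \<and> rs l1 u1 + rs l2 u2 + rs l3 u3 = 0)"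
proof
  assume "\<exists>c1 c2 c3. (c1, c2, c3) \<noteq> (0, 0, 0) \<and> rs c1 (rs a1 u1) + rs c2 (rs a2 u2) + rs c3 (rs a3 u3) = 0"
  then obtain c1 c2 c3 where "(c1, c2, c3) \<noteq> (0, 0, 0)" "rs (c1 * a1) u1 + rs (c2 * a2) u2 + rs (c3 * a3) u3 = 0"
    by auto
  then show "\<exists>l1 l2 l3. (l1, l2, l3) \<noteq> (0, 0, 0) \<and> rs l1 u1 + rs l2 u2 + rs l3 u3 = 0"
    using assms by (intro exI[of _ "c1 * a1"] exI[of _ "c2 * a2"] exI[of _ "c3 * a3"]) auto
next
  assume "\<exists>l1 l2 l3. (l1, l2, l3) \<noteq> (0, 0, 0) \<and> rs l1 u1 + rs l2 u2 + rs l3 u3 = 0"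
  then obtain l1 l2 l3 where "(l1, l2, l3) \<noteq> (0, 0, 0)" "rs l1 u1 + rs l2 u2 + rs l3 u3 = 0"
    by blast
  then show "\<exists>c1 c2 c3. (c1, c2, c3) \<noteq> (0, 0, 0) \<and> rs c1 (rs a1 u1) + rs c2 (rs a2 u2) + rs c3 (rs a3 u3) = 0"
    using assms by (intro exI[of _ "l1 / a1"] exI[of _ "l2 / a2"] exI[of _ "l3 / a3"]) auto
qed

text \<open>The point \<open>A\<close> is taken on the first axis, so that the first moment vanishes.\<close>

lemma coplanar_axes_if_dependent:
  assumes OR: "OR = {b. is_dbasis smul b \<and> same_orientation smul b0 b}"
    and unit: "sp u1 u1 = 1" "sp u2 u2 = 1"
    and par: "u1 - rs c12 u2 \<in> EM" "u2 - rs c23 u3 \<in> EM"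
    and dep: "(l1, l2, l3) \<noteq> (0, 0, 0)" "rs l1 u1 + rs l2 u2 + rs l3 u3 = 0"
  shows "coplanar_in_E smul sp OR {axis_of u1, axis_of u2, axis_of u3}"
proof -
  obtain f where f: "f \<in> OR" "orthonormal_mod_EM f"
    using exists_positive_orthonormal_mod_EM OR by blast
  obtain A where "A \<in> Espace smul sp" and u1_A: "u1 \<in> A" using exists_point_on_axis[OF unit(1)] .
  interpret frame_at_point smul sp b0 f A using f(2) \<open>A \<in> Espace smul sp\<close> by unfold_locales
  have re: "{re u1, re u2, re u3} \<subseteq> span {re u2}" "re u1 \<noteq> 0" "re u2 \<noteq> 0" "re u3 \<noteq> 0"
    using parallel_re_in_span[OF unit(2) par] unit_coords(3)[OF unit(1)] unit_coords(3)[OF unit(2)]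
    by auto
  obtain m where m: "{du u1, du u2, du u3} \<subseteq> span {m}"
    using collinear_if_dependent[OF dep(1) _ _ re(2) du_eq_0_on_A[OF u1_A]] dep(2)
    unfolding dependent3_iff_coords by blast
  obtain n where "n \<noteq> 0"
    and n: "\<And>x w. x \<noteq> 0 \<Longrightarrow> x \<in> span {re u2} \<Longrightarrow> w \<in> span {m} \<Longrightarrow> moment_line x w \<subseteq> {y. n \<bullet> y = 0}"
    using parallel_lines_in_common_plane by blast
  show ?thesis
    unfolding coplanar_in_E_def pos_orthonormal_V_def
  proof (intro exI conjI bexI)
    show "f \<in> OR" "\<forall>i j. dre (sp (f$i) (f$j)) = (if i = j then 1 else 0)"
      using f by (simp_all add: orthonormal_mod_EM_def)
    show "subspace {y. n \<bullet> y = 0}" "dim {y. n \<bullet> y = 0} = 2"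
      using subspace_hyperplane dim_hyperplane[OF \<open>n \<noteq> 0\<close>] by auto
    show "\<forall>L\<in>{axis_of u1, axis_of u2, axis_of u3}.
        \<forall>P\<in>L. Ediff smul f P A \<in> {y. n \<bullet> y = 0}"
    proof -
      have "\<forall>P\<in>axis_of u. Ediff smul f P A \<in> {y. n \<bullet> y = 0}"
        if "u \<in> {u1, u2, u3}" for u
        unfolding Ediff_axis_subset_iff using n re m that by auto
      then show ?thesis by blast
    qed
  qed (fact A_point)
qed

lemma dependent_if_coplanar_axes:
  assumes unit: "sp u1 u1 = 1" "sp u2 u2 = 1" "sp u3 u3 = 1"
    and par: "u1 - rs c12 u2 \<in> EM" "u2 - rs c23 u3 \<in> EM"
    and cop: "coplanar_in_E smul sp OR {axis_of u1, axis_of u2, axis_of u3}"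
  shows "\<exists>l1 l2 l3. (l1, l2, l3) \<noteq> (0, 0, 0) \<and> rs l1 u1 + rs l2 u2 + rs l3 u3 = 0"
proof -
  obtain f A W where "pos_orthonormal_V smul sp OR f" and A: "A \<in> Espace smul sp"
    and W: "subspace W" "dim W = 2"
    and axes: "\<forall>L\<in>{axis_of u1, axis_of u2, axis_of u3}. \<forall>P\<in>L. Ediff smul f P A \<in> W"
    using cop unfolding coplanar_in_E_def by blast
  then have "orthonormal_mod_EM f" by (simp add: pos_orthonormal_V_def orthonormal_mod_EM_def)
  then interpret frame_at_point smul sp b0 f A using A by unfold_locales
  have lines: "moment_line (re u) (du u) \<subseteq> W" if "u \<in> {u1, u2, u3}" for u
    using axes that by (auto simp: Ediff_axis_subset_iff[symmetric])
  obtain n where "n \<noteq> 0" "span W \<subseteq> {y. n \<bullet> y = 0}"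
    using lowdim_subset_hyperplane[of W] W(2) by auto
  then have "\<forall>y\<in>W. n \<bullet> y = 0" using span_base by blast
  then have "du u \<in> span {n}" if "u \<in> {u1, u2, u3}" for u
    using moment_in_span_normal[OF \<open>n \<noteq> 0\<close> W(1) _ _ _ lines[OF that]] unit_coords[of u] unit that
    by auto
  then have "{du u1, du u2, du u3} \<subseteq> span {n}" by blast
  with parallel_re_in_span(1)[OF unit(2) par] show ?thesis
    unfolding dependent3_iff_coords by (rule dependent_if_collinear)
qed

lemma dependent_iff_coplanar_axes:
  assumes OR: "OR = {b. is_dbasis smul b \<and> same_orientation smul b0 b}"
    and unit: "sp u1 u1 = 1" "sp u2 u2 = 1" "sp u3 u3 = 1"
    and par: "u1 - rs c12 u2 \<in> EM" "u2 - rs c23 u3 \<in> EM"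
  shows "(\<exists>l1 l2 l3. (l1, l2, l3) \<noteq> (0, 0, 0) \<and> rs l1 u1 + rs l2 u2 + rs l3 u3 = 0)
    \<longleftrightarrow> coplanar_in_E smul sp OR {axis_of u1, axis_of u2, axis_of u3}"
  using coplanar_axes_if_dependent[OF OR unit(1,2) par] dependent_if_coplanar_axes[OF unit par]
  by blast
end

theorem proposition17:
  fixes smul :: "dual \<Rightarrow> 'm::ab_group_add \<Rightarrow> 'm"
    and sp :: "'m \<Rightarrow> 'm \<Rightarrow> dual"
    and OR :: "('m^3) set"
    and z1 z2 z3 :: 'm
  assumes "dmod_sp_or smul sp OR"
    and "z1 \<notin> epsM smul" "z2 \<notin> epsM smul" "z3 \<notin> epsM smul"
    and "sliding_vector smul sp z1" "sliding_vector smul sp z2" "sliding_vector smul sp z3"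
    and "parallel_axes smul sp z1 z2" "parallel_axes smul sp z2 z3" "parallel_axes smul sp z1 z3"
  shows "(\<exists>c1 c2 c3::real. (c1, c2, c3) \<noteq> (0, 0, 0) \<and>
            rscale smul c1 z1 + rscale smul c2 z2 + rscale smul c3 z3 = 0)
         \<longleftrightarrow> coplanar_in_E smul sp OR {axis smul sp z1, axis smul sp z2, axis smul sp z3}"
proof -
  obtain b0 where "screw_module smul sp b0"
    and OR: "OR = {b. is_dbasis smul b \<and> same_orientation smul b0 b}"
    using assms(1) by (auto simp: dmod_sp_or_def is_orientation_def intro: screw_module.intro)
  then interpret screw_module smul sp b0 by simp
  define u1 u2 u3 where "u1 = unit_part smul sp z1" and "u2 = unit_part smul sp z2"
    and "u3 = unit_part smul sp z3"
  obtain a1 a2 a3 where a: "a1 > 0" "a2 > 0" "a3 > 0"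
    and z: "z1 = rs a1 u1" "z2 = rs a2 u2" "z3 = rs a3 u3"
    and unit: "sp u1 u1 = 1" "sp u2 u2 = 1" "sp u3 u3 = 1"
    using sliding_vector_decomp[OF assms(2,5)] sliding_vector_decomp[OF assms(3,6)]
      sliding_vector_decomp[OF assms(4,7)] unfolding u1_def u2_def u3_def by metis
  obtain c12 c23 where par: "u1 - rs c12 u2 \<in> EM" "u2 - rs c23 u3 \<in> EM"
    using assms(8,9) unfolding parallel_axes_def u1_def u2_def u3_def by blast
    \<comment> \<open>parallelism of the first and third axes follows\<close>
  have "axis smul sp z1 = axis_of u1" "axis smul sp z2 = axis_of u2" "axis smul sp z3 = axis_of u3"
    by (simp_all add: axis_def u1_def u2_def u3_def)
  moreover have "(\<exists>c1 c2 c3. (c1, c2, c3) \<noteq> (0, 0, 0) \<and> rs c1 z1 + rs c2 z2 + rs c3 z3 = 0)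
      \<longleftrightarrow> (\<exists>l1 l2 l3. (l1, l2, l3) \<noteq> (0, 0, 0) \<and> rs l1 u1 + rs l2 u2 + rs l3 u3 = 0)"
    unfolding z using a by (intro dependent3_rescale_iff) auto
  ultimately show ?thesis using dependent_iff_coplanar_axes[OF OR unit par] by simp
qed

end
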